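(* For every $L\ge1$, the Lie algebra $\mathfrak{OA}_{1,L}=\mathfrak{OA}/\mathfrak I_{(t-1)^L}$ is solvable of dimension $L+\lfloor L/2\rfloor$, and the images of $X_k$ ($0\le k<L$) together with the images of $Y_j$ ($0\le j<L$, $j$ odd) form a basis of it.
   Context: Work over $\mathbb C$. $\mathfrak{sl}_2$ has basis $e,f,h$ with $[e,f]=h$, $[h,e]=2e$, $[h,f]=-2f$. The Onsager algebra is the Lie subalgebra $\mathfrak{OA}=\{p(t)e+p(t^{-1})f+q(t)h:\ p,q\in\mathbb C[t,t^{-1}],\ q(t^{-1})=-q(t)\}$ of the loop algebra $\mathbb C[t,t^{-1}]\otimes\mathfrak{sl}_2$ (bracket $[px,qy]=pq[x,y]$). $\mathfrak I_{(t-1)^L}=\{p(t)e+p(t^{-1})f+q(t)h\in\mathfrak{OA}: p,q\in(t-1)^L\mathbb C[t,t^{-1}]\}$. For $k\ge0$, $X_k=2(t-1)^ke+2(t^{-1}-1)^kf$ and $Y_k=(-1)^k\big((t-1)^k-(t^{-1}-1)^k\big)h$, elements of $\mathfrak{OA}$. $\lfloor r\rfloor$ is the integer part. *)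

theory Defs
  imports Complex_Main "HOL-Library.Poly_Mapping" "HOL-Library.Product_Plus"
begin

text \<open>Laurent polynomials C[t,t^-1] as the group algebra of the integers:
  finitely supported maps from exponents to coefficients.\<close>
type_synonym lpoly = "int \<Rightarrow>\<^sub>0 complex"

definition T :: lpoly where "T = Poly_Mapping.single 1 1"
definition Tinv :: lpoly where "Tinv = Poly_Mapping.single (-1) 1"
definition cst :: "complex \<Rightarrow> lpoly" where "cst c = Poly_Mapping.single 0 c"

definition inv_sub :: "lpoly \<Rightarrow> lpoly" where
  "inv_sub p = Poly_Mapping.map_key uminus p"

text \<open>Elements of the loop algebra C[t,t^-1] (x) sl2: a triple (a,b,c) stands
  for a e + b f + c h.  Addition, zero, minus are componentwise (Product_Plus).\<close>
type_synonym loop = "lpoly \<times> lpoly \<times> lpoly"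

definition smul :: "complex \<Rightarrow> loop \<Rightarrow> loop" where
  "smul c x = (cst c * fst x, cst c * fst (snd x), cst c * snd (snd x))"

text \<open>Bracket induced by [e,f]=h, [h,e]=2e, [h,f]=-2f.\<close>
definition br :: "loop \<Rightarrow> loop \<Rightarrow> loop" where
  "br x y = (case x of (a, b, c) \<Rightarrow> case y of (a', b', c') \<Rightarrow>
     (2 * (c * a' - a * c'), 2 * (b * c' - c * b'), a * b' - b * a'))"

definition OA :: "loop set" where
  "OA = {(p, inv_sub p, q) | p q. inv_sub q = - q}"

definition Iid :: "nat \<Rightarrow> loop set" where
  "Iid L = {(p, inv_sub p, q) | p q. inv_sub q = - q \<and>
              (T - 1) ^ L dvd p \<and> (T - 1) ^ L dvd q}"

definition X :: "nat \<Rightarrow> loop" where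
  "X k = (2 * (T - 1) ^ k, 2 * (Tinv - 1) ^ k, 0)"

definition Y :: "nat \<Rightarrow> loop" where
  "Y k = (0, 0, (-1) ^ k * ((T - 1) ^ k - (Tinv - 1) ^ k))"

definition lspan :: "loop set \<Rightarrow> loop set" where
  "lspan S = {x. \<exists>F c. finite F \<and> F \<subseteq> S \<and> x = (\<Sum>v\<in>F. smul (c v) v)}"

fun derived :: "nat \<Rightarrow> loop set" where
  "derived 0 = OA"
| "derived (Suc n) = lspan {br x y | x y. x \<in> derived n \<and> y \<in> derived n}"

definition Bidx :: "nat \<Rightarrow> (nat + nat) set" where
  "Bidx L = Inl ` {..<L} \<union> Inr ` {j. j < L \<and> odd j}"

fun bvec :: "nat + nat \<Rightarrow> loop" where
  "bvec (Inl k) = X k"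
| "bvec (Inr j) = Y j"

end

theory Submission
  imports Defs
begin

text \<open>Write S = t - 1. Evaluation at t = 1 (the augmentation) has kernel (S), so modulo S^L
  every Laurent polynomial has a unique expansion in the powers S^k, k < L; this takes care
  of the e-component, spanned by the X_k. Since t^-1 - 1 = -t^-1 S, the substitution t to t^-1
  multiplies the lowest coefficient of S^k r by (-1)^k. Hence an h-component q, which is
  antisymmetric under this substitution, has odd S-adic order, and it is expanded modulo S^L
  by the Y_j with j odd, whose lowest coefficients are nonzero.

  For solvability, write a e + b f + c h in the basis e + f, e - f, h of sl_2, in which
  [h, e + f] = 2 (e - f), [h, e - f] = 2 (e + f) and [e + f, e - f] = -2 h. If the
  (e + f)-coordinate is divisible by S^j and the other two by S^k, the bracket of two such
  elements satisfies the same with j, k replaced by 2 k, j + k. OA satisfies this for (0, 1),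
  so the L-th derived algebra does for (L, L), i.e. it lies in the ideal of S^L.\<close>

section \<open>Laurent polynomials\<close>

abbreviation S :: lpoly where "S \<equiv> T - 1"

lemma poly_mapping_single_induct [case_names zero add]:
  fixes p :: "'a \<Rightarrow>\<^sub>0 'b::monoid_add"
  assumes "P 0" and "\<And>p k c. P p \<Longrightarrow> P (p + Poly_Mapping.single k c)"
  shows "P p"
proof (induction p rule: update_induct)
  case (update p k c)
  then have "Poly_Mapping.update k c p = p + Poly_Mapping.single k c"
    by (intro poly_mapping_eqI)
      (auto simp: lookup_update lookup_add lookup_single not_in_keys_iff_lookup_eq_zero when_def)
  then show ?case using update assms(2) by simp
qed (fact assms(1))

definition augmentation :: "('a \<Rightarrow>\<^sub>0 'b::comm_monoid_add) \<Rightarrow> 'b" where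
  "augmentation p = sum (Poly_Mapping.lookup p) (Poly_Mapping.keys p)"

lemma augmentation_eq_sum:
  "finite A \<Longrightarrow> Poly_Mapping.keys p \<subseteq> A \<Longrightarrow> augmentation p = sum (Poly_Mapping.lookup p) A"
  unfolding augmentation_def
  by (rule sum.mono_neutral_left) (auto simp: not_in_keys_iff_lookup_eq_zero)

lemma augmentation_zero [simp]: "augmentation 0 = 0"
  by (simp add: augmentation_def)

lemma augmentation_single [simp]: "augmentation (Poly_Mapping.single k c) = c"
  by (subst augmentation_eq_sum[of "{k}"]) auto

lemma augmentation_add [simp]: "augmentation (p + q) = augmentation p + augmentation q"
proof -
  let ?A = "Poly_Mapping.keys p \<union> Poly_Mapping.keys q"
  have "augmentation (p + q) = sum (Poly_Mapping.lookup (p + q)) ?A"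
    by (rule augmentation_eq_sum) (auto simp: keys_add)
  also have "\<dots> = sum (Poly_Mapping.lookup p) ?A + sum (Poly_Mapping.lookup q) ?A"
    by (simp add: lookup_add sum.distrib)
  also have "\<dots> = augmentation p + augmentation q"
    using augmentation_eq_sum[of ?A p] augmentation_eq_sum[of ?A q] by auto
  finally show ?thesis .
qed

lemma augmentation_minus [simp]:
  fixes p :: "'a \<Rightarrow>\<^sub>0 'b::ab_group_add"
  shows "augmentation (- p) = - augmentation p"
  by (metis add_eq_0_iff augmentation_add augmentation_zero neg_eq_iff_add_eq_0)

lemma augmentation_diff [simp]:
  fixes p :: "'a \<Rightarrow>\<^sub>0 'b::ab_group_add"
  shows "augmentation (p - q) = augmentation p - augmentation q"
  by (simp only: diff_conv_add_uminus augmentation_add augmentation_minus)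

lemma augmentation_mult [simp]:
  fixes p :: "'a::monoid_add \<Rightarrow>\<^sub>0 'b::semiring_1"
  shows "augmentation (p * q) = augmentation p * augmentation q"
proof -
  have single: "augmentation (Poly_Mapping.single k c * q) = c * augmentation q" for k c q
    by (induction q rule: poly_mapping_single_induct)
      (simp_all add: distrib_left mult_single)
  show ?thesis
    by (induction p rule: poly_mapping_single_induct) (simp_all add: distrib_right single)
qed

lemma augmentation_one [simp]: "augmentation (1 :: 'a::monoid_add \<Rightarrow>\<^sub>0 'b::semiring_1) = 1"
  using augmentation_single[of 0 "1 :: 'b"] by simp

lemma augmentation_power [simp]:
  fixes p :: "'a::monoid_add \<Rightarrow>\<^sub>0 'b::semiring_1"
  shows "augmentation (p ^ k) = augmentation p ^ k"
  by (induction k) simp_all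

lemma cst_mult: "cst a * cst b = cst (a * b)"
  by (simp add: cst_def mult_single)

lemma cst_numeral [simp]: "cst (numeral n) = numeral n"
  and cst_0 [simp]: "cst 0 = 0" and cst_1 [simp]: "cst 1 = 1"
  by (simp_all add: cst_def)

lemma inv_sub_single: "inv_sub (Poly_Mapping.single k c) = Poly_Mapping.single (- k) c"
  using map_key_single[of uminus "- k" c] by (simp add: inv_sub_def)

lemma inv_sub_zero [simp]: "inv_sub 0 = 0"
  by (simp add: inv_sub_def)

lemma inv_sub_add [simp]: "inv_sub (p + q) = inv_sub p + inv_sub q"
  unfolding inv_sub_def by (rule map_key_plus) simp

lemma inv_sub_minus [simp]: "inv_sub (- p) = - inv_sub p"
  by (metis add_eq_0_iff inv_sub_add inv_sub_zero neg_eq_iff_add_eq_0)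

lemma inv_sub_diff [simp]: "inv_sub (p - q) = inv_sub p - inv_sub q"
  by (simp only: diff_conv_add_uminus inv_sub_add inv_sub_minus)

lemma inv_sub_mult [simp]: "inv_sub (p * q) = inv_sub p * inv_sub q"
proof -
  have single: "inv_sub (Poly_Mapping.single k c * q) = Poly_Mapping.single (- k) c * inv_sub q"
    for k c q
    by (induction q rule: poly_mapping_single_induct)
      (simp_all add: distrib_left mult_single inv_sub_single)
  show ?thesis
    by (induction p rule: poly_mapping_single_induct)
      (simp_all add: distrib_right single inv_sub_single)
qed

lemma inv_sub_inv_sub [simp]: "inv_sub (inv_sub p) = p"
  by (induction p rule: poly_mapping_single_induct) (simp_all add: inv_sub_single)

lemma inv_sub_cst [simp]: "inv_sub (cst c) = cst c"
  by (simp add: cst_def inv_sub_single)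

lemma inv_sub_one [simp]: "inv_sub 1 = 1"
  and inv_sub_numeral [simp]: "inv_sub (numeral n) = numeral n"
  by (metis cst_1 inv_sub_cst, metis cst_numeral inv_sub_cst)

lemma inv_sub_power [simp]: "inv_sub (p ^ k) = inv_sub p ^ k"
  by (induction k) simp_all

lemma inv_sub_sum: "inv_sub (sum f A) = (\<Sum>a\<in>A. inv_sub (f a))"
  by (induction A rule: infinite_finite_induct) simp_all

lemma inv_sub_T [simp]: "inv_sub T = Tinv" and inv_sub_Tinv [simp]: "inv_sub Tinv = T"
  by (simp_all add: T_def Tinv_def inv_sub_single)

lemma Tinv_minus_one: "Tinv - 1 = - Tinv * S"
proof -
  have "T * Tinv = 1" by (simp add: T_def Tinv_def mult_single)
  then show ?thesis by (simp add: algebra_simps)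
qed

lemma Tinv_minus_one_power: "(Tinv - 1) ^ k = (- Tinv) ^ k * S ^ k"
  by (simp only: Tinv_minus_one power_mult_distrib)

lemma dvd_two_mult_iff: "a dvd 2 * p \<longleftrightarrow> a dvd (p :: lpoly)"
proof
  have "cst (1 / 2) * 2 = 1"
    using cst_mult[of "1 / 2" 2] by simp
  then have "p = cst (1 / 2) * (2 * p)"
    by (simp flip: mult.assoc)
  then show "a dvd p" if "a dvd 2 * p"
    using dvd_mult[OF that] by metis
qed simp

lemma augmentation_cst [simp]: "augmentation (cst c) = c"
  and augmentation_T [simp]: "augmentation T = 1"
  and augmentation_Tinv [simp]: "augmentation Tinv = 1"
  by (simp_all add: cst_def T_def Tinv_def)

lemma augmentation_inv_sub [simp]: "augmentation (inv_sub p) = augmentation p"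
  by (induction p rule: poly_mapping_single_induct) (simp_all add: inv_sub_single)

lemma S_dvd_single_minus_one: "S dvd Poly_Mapping.single n 1 - 1"
proof -
  have T_power: "T ^ k = Poly_Mapping.single (int k) 1" for k
    by (induction k) (simp_all add: T_def mult_single add.commute)
  then have S_dvd: "S dvd Poly_Mapping.single (int k) 1 - 1" for k
    using power_diff_1_eq[of T k] by simp
  obtain k where "n = int k \<or> n = - int k"
    by (metis int_cases2)
  then show ?thesis
  proof
    assume "n = - int k"
    then have "Poly_Mapping.single n (1::complex) - 1
        = - Poly_Mapping.single n 1 * (Poly_Mapping.single (int k) 1 - 1)"
      by (simp add: algebra_simps mult_single)
    then show ?thesis using S_dvd[of k] by simp
  qed (use S_dvd in simp)
qed

lemma S_dvd_minus_augmentation: "S dvd p - cst (augmentation p)"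
proof (induction p rule: poly_mapping_single_induct)
  case (add p n c)
  have "p + Poly_Mapping.single n c - cst (augmentation (p + Poly_Mapping.single n c))
      = (p - cst (augmentation p)) + cst c * (Poly_Mapping.single n 1 - 1)"
    by (simp add: cst_def algebra_simps mult_single single_add)
  then show ?case
    by (simp only:) (intro dvd_add add dvd_mult S_dvd_single_minus_one)
qed simp

lemma S_dvd_iff: "S dvd p \<longleftrightarrow> augmentation p = 0"
  using S_dvd_minus_augmentation[of p] by (auto elim!: dvdE)

lemma S_nonzero: "S \<noteq> 0"
proof
  assume "S = 0"
  then have "Poly_Mapping.lookup S 1 = 0" by simp
  then show False by (simp add: T_def lookup_minus lookup_one)
qed

lemma S_power_Suc_dvd_iff: "S ^ Suc n dvd S * p \<longleftrightarrow> S ^ n dvd p"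
  using S_nonzero by simp

section \<open>The derived series\<close>

lemma smul_Pair: "smul c (a, b, d) = (cst c * a, cst c * b, cst c * d)"
  by (simp add: smul_def)

definition lsubspace :: "loop set \<Rightarrow> bool" where
  "lsubspace A \<longleftrightarrow> 0 \<in> A \<and> (\<forall>x\<in>A. \<forall>y\<in>A. x + y \<in> A) \<and> (\<forall>c. \<forall>x\<in>A. smul c x \<in> A)"

lemma lsubspace_sum: "lsubspace A \<Longrightarrow> (\<And>i. i \<in> F \<Longrightarrow> f i \<in> A) \<Longrightarrow> sum f F \<in> A"
  unfolding lsubspace_def by (induction F rule: infinite_finite_induct) auto

lemma lspan_subset:
  assumes A: "lsubspace A" and "B \<subseteq> A"
  shows "lspan B \<subseteq> A"
proof
  fix x assume "x \<in> lspan B"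
  then obtain F c where "F \<subseteq> B" and x: "x = (\<Sum>v\<in>F. smul (c v) v)"
    unfolding lspan_def by blast
  then have "smul (c v) v \<in> A" if "v \<in> F" for v
    using that assms unfolding lsubspace_def by blast
  then show "x \<in> A"
    unfolding x by (rule lsubspace_sum[OF A])
qed

lemma OA_iff:
  "x \<in> OA \<longleftrightarrow> fst (snd x) = inv_sub (fst x) \<and> inv_sub (snd (snd x)) = - snd (snd x)"
  by (cases x) (auto simp: OA_def)

lemma lsubspace_OA: "lsubspace OA"
  by (auto simp: lsubspace_def OA_iff smul_def)

lemma OA_diff: "x \<in> OA \<Longrightarrow> y \<in> OA \<Longrightarrow> x - y \<in> OA"
  by (simp add: OA_iff)

lemma br_OA: "x \<in> OA \<Longrightarrow> y \<in> OA \<Longrightarrow> br x y \<in> OA"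
  by (cases x, cases y) (auto simp: OA_iff br_def algebra_simps)

lemma derived_subset_OA: "derived n \<subseteq> OA"
proof (induction n)
  case (Suc n)
  then show ?case
    by (simp, intro lspan_subset lsubspace_OA) (blast intro: br_OA)
qed simp

text \<open>The coordinates of a e + b f + c h in the basis e + f, e - f, h are (a + b)/2, (a - b)/2, c.\<close>

definition filtration :: "nat \<Rightarrow> nat \<Rightarrow> loop set" where
  "filtration j k = {(a, b, c). S ^ j dvd a + b \<and> S ^ k dvd a - b \<and> S ^ k dvd c}"

lemma lsubspace_filtration: "lsubspace (filtration j k)"
  unfolding lsubspace_def
proof (intro conjI ballI allI)
  show "0 \<in> filtration j k"
    by (simp add: filtration_def zero_prod_def)
next
  fix x y assume x: "x \<in> filtration j k" and y: "y \<in> filtration j k"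
  obtain a b c a' b' c' where xy: "x = (a, b, c)" "y = (a', b', c')"
    by (metis prod_cases3)
  have "S ^ j dvd (a + b) + (a' + b')" "S ^ k dvd (a - b) + (a' - b')" "S ^ k dvd c + c'"
    using x y by (simp_all add: xy filtration_def dvd_add)
  moreover have "a + a' + (b + b') = (a + b) + (a' + b')" "a + a' - (b + b') = (a - b) + (a' - b')"
    by (simp_all add: algebra_simps)
  ultimately show "x + y \<in> filtration j k"
    by (simp only: xy add_Pair filtration_def mem_Collect_eq prod.case simp_thms)
next
  fix c x assume "x \<in> filtration j k"
  then show "smul c x \<in> filtration j k"
    by (cases x) (simp add: filtration_def smul_Pair flip: distrib_left right_diff_distrib)
qed

lemma filtration_antimono: "j' \<le> j \<Longrightarrow> k' \<le> k \<Longrightarrow> filtration j k \<subseteq> filtration j' k'"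
  by (auto simp: filtration_def intro: dvd_trans[OF le_imp_power_dvd])

lemma br_filtration:
  assumes "x \<in> filtration j k" and "y \<in> filtration j k"
  shows "br x y \<in> filtration (2 * k) (j + k)"
proof -
  obtain a b c a' b' c' where xy: "x = (a, b, c)" "y = (a', b', c')"
    by (metis prod_cases3)
  have h: "S ^ j dvd a + b" "S ^ k dvd a - b" "S ^ k dvd c"
    "S ^ j dvd a' + b'" "S ^ k dvd a' - b'" "S ^ k dvd c'"
    using assms by (simp_all add: filtration_def xy)
  have prod: "S ^ (m + n) dvd u * v" if "S ^ m dvd u" "S ^ n dvd v" for m n u v
    using that by (simp add: power_add mult_dvd_mono)
  have "S ^ (2 * k) dvd c * (a' - b') - c' * (a - b)"
    and "S ^ (j + k) dvd (a' + b') * c - (a + b) * c'"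
    and third: "S ^ (j + k) dvd (a' + b') * (a - b) - (a + b) * (a' - b')"
    unfolding mult_2 by (intro dvd_diff prod h)+
  moreover have "2 * (a * b' - b * a') = (a' + b') * (a - b) - (a + b) * (a' - b')"
    by (simp add: algebra_simps)
  then have "S ^ (j + k) dvd a * b' - b * a'"
    using third dvd_two_mult_iff by metis
  moreover have "2 * (c * a' - a * c') + 2 * (b * c' - c * b') = 2 * (c * (a' - b') - c' * (a - b))"
    and "2 * (c * a' - a * c') - 2 * (b * c' - c * b') = 2 * ((a' + b') * c - (a + b) * c')"
    by (simp_all add: algebra_simps)
  ultimately show ?thesis
    unfolding xy br_def filtration_def by (simp only: prod.case mem_Collect_eq dvd_mult simp_thms)
qed

lemma OA_subset_filtration: "OA \<subseteq> filtration 0 1"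
proof
  fix x assume "x \<in> OA"
  then obtain p q where x: "x = (p, inv_sub p, q)" and q: "inv_sub q = - q"
    unfolding OA_def by blast
  have "augmentation q = 0"
    using arg_cong[OF q, of augmentation] by simp
  then show "x \<in> filtration 0 1"
    by (simp add: x filtration_def S_dvd_iff)
qed

lemma derived_Suc_subset_filtration:
  "derived n \<subseteq> filtration j k \<Longrightarrow> derived (Suc n) \<subseteq> filtration (2 * k) (j + k)"
  by (simp, intro lspan_subset lsubspace_filtration) (blast intro: br_filtration)

lemma derived_subset_filtration: "derived (Suc n) \<subseteq> filtration (Suc n) (Suc n)"
proof (induction n)
  case 0
  then show ?case
    using derived_Suc_subset_filtration[of 0 0 1] OA_subset_filtration filtration_antimono[of 1 2 1 1]
    by auto
next
  case (Suc n)
  then show ?case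
    using derived_Suc_subset_filtration[OF Suc]
      filtration_antimono[of "Suc (Suc n)" "2 * Suc n" "Suc (Suc n)" "Suc n + Suc n"]
    by auto
qed

lemma Iid_iff: "x \<in> Iid L \<longleftrightarrow> x \<in> OA \<and> S ^ L dvd fst x \<and> S ^ L dvd snd (snd x)"
  by (cases x) (auto simp: Iid_def OA_def)

lemma derived_subset_Iid:
  assumes "L \<ge> 1"
  shows "derived L \<subseteq> Iid L"
proof
  fix x assume x: "x \<in> derived L"
  obtain a b c where [simp]: "x = (a, b, c)"
    by (metis prod_cases3)
  have "x \<in> filtration L L"
    using x derived_subset_filtration[of "L - 1"] assms by auto
  then have sum: "S ^ L dvd a + b" and diff: "S ^ L dvd a - b" and c: "S ^ L dvd c"
    by (simp_all add: filtration_def)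
  from sum diff have "S ^ L dvd (a + b) + (a - b)"
    by (rule dvd_add)
  moreover have "(a + b) + (a - b) = 2 * a"
    by (simp add: algebra_simps mult_2)
  ultimately have "S ^ L dvd a"
    by (metis dvd_two_mult_iff)
  then show "x \<in> Iid L"
    using x c derived_subset_OA by (auto simp: Iid_iff)
qed

section \<open>Expansions in powers of t - 1\<close>

lemma S_adic_coeffs_eq_0:
  assumes "\<And>k. k < L \<Longrightarrow> augmentation (u k) \<noteq> 0"
    and "S ^ L dvd (\<Sum>k<L. cst (a k) * (S ^ k * u k))"
  shows "\<forall>k<L. a k = 0"
  using assms
proof (induction L arbitrary: a u)
  case (Suc L)
  let ?R = "\<Sum>k<L. cst (a (Suc k)) * (S ^ k * u (Suc k))"
  have "(\<Sum>k<Suc L. cst (a k) * (S ^ k * u k)) = cst (a 0) * u 0 + S * ?R"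
    by (subst sum.lessThan_Suc_shift) (simp add: sum_distrib_left ac_simps)
  with Suc.prems(2) have dvd: "S ^ Suc L dvd cst (a 0) * u 0 + S * ?R"
    by simp
  then have "S dvd cst (a 0) * u 0 + S * ?R"
    by (rule dvd_trans[rotated]) simp
  then have "a 0 * augmentation (u 0) = 0"
    by (simp add: S_dvd_iff)
  with Suc.prems(1)[of 0] have a0: "a 0 = 0"
    by simp
  with dvd have "S ^ Suc L dvd S * ?R"
    by (simp only: cst_0 mult_zero_left add_0_left)
  then have "S ^ L dvd ?R"
    by (simp only: S_power_Suc_dvd_iff)
  with Suc.prems(1) have "\<forall>k<L. a (Suc k) = 0"
    by (intro Suc.IH[of "\<lambda>k. u (Suc k)"]) simp_all
  with a0 show ?case
    by (metis less_Suc_eq_0_disj)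
qed simp

lemma S_adic_expansion: "\<exists>a. S ^ L dvd p - (\<Sum>k<L. cst (a k) * S ^ k)"
proof (induction L arbitrary: p)
  case (Suc L)
  obtain r where r: "p - cst (augmentation p) = S * r"
    using S_dvd_minus_augmentation[of p] by blast
  obtain b where b: "S ^ L dvd r - (\<Sum>k<L. cst (b k) * S ^ k)"
    using Suc.IH by blast
  define a where "a k = (case k of 0 \<Rightarrow> augmentation p | Suc j \<Rightarrow> b j)" for k
  have "(\<Sum>k<Suc L. cst (a k) * S ^ k) = cst (augmentation p) + (\<Sum>k<L. cst (b k) * S ^ Suc k)"
    by (simp only: sum.lessThan_Suc_shift a_def nat.case power_0 mult_1_right)
  also have "\<dots> = cst (augmentation p) + S * (\<Sum>k<L. cst (b k) * S ^ k)"
    by (simp add: sum_distrib_left mult.left_commute)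
  finally have "p - (\<Sum>k<Suc L. cst (a k) * S ^ k) = S * (r - (\<Sum>k<L. cst (b k) * S ^ k))"
    by (simp only: diff_diff_eq[symmetric] r right_diff_distrib)
  with b have "S ^ Suc L dvd p - (\<Sum>k<Suc L. cst (a k) * S ^ k)"
    by (simp only: S_power_Suc_dvd_iff)
  then show ?case by blast
qed simp

lemma antisymmetric_S_power_dvd_Suc:
  assumes q: "inv_sub q = - q" and "even k" and "S ^ k dvd q"
  shows "S ^ Suc k dvd q"
proof -
  obtain r where r: "q = S ^ k * r"
    using assms(3) by blast
  have "inv_sub (S ^ k) = (- Tinv) ^ k * S ^ k"
    by (simp add: Tinv_minus_one_power)
  with q have "S ^ k * ((- Tinv) ^ k * inv_sub r) = S ^ k * (- r)"
    by (simp add: r ac_simps)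
  then have "(- Tinv) ^ k * inv_sub r = - r"
    using S_nonzero by (simp only: mult_left_cancel power_eq_0_iff simp_thms)
  then have "augmentation r = - augmentation r"
    using \<open>even k\<close> by (metis augmentation_inv_sub augmentation_minus augmentation_mult
        augmentation_power augmentation_Tinv power_one mult_1 power_minus_even)
  then have "S dvd r"
    by (simp add: S_dvd_iff)
  then show ?thesis
    by (simp add: r mult_dvd_mono)
qed

definition U :: "nat \<Rightarrow> lpoly" where
  "U j = (-1) ^ j * (1 - (- Tinv) ^ j)"

lemma Y_eq: "Y j = (0, 0, S ^ j * U j)"
  unfolding Y_def U_def Tinv_minus_one_power by (simp add: algebra_simps)

lemma augmentation_U_odd: "odd j \<Longrightarrow> augmentation (U j) \<noteq> 0"
  by (simp add: U_def)

lemma X_in_OA: "X k \<in> OA"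
  by (simp add: X_def OA_iff)

lemma Y_in_OA: "Y k \<in> OA"
  by (simp add: Y_def OA_iff algebra_simps)

lemma inv_sub_S_power_U: "inv_sub (S ^ j * U j) = - (S ^ j * U j)"
  using Y_in_OA[of j] by (simp add: OA_iff Y_eq)

abbreviation odd_below :: "nat \<Rightarrow> nat set" where
  "odd_below L \<equiv> {j. j < L \<and> odd j}"

lemma antisymmetric_S_adic_expansion:
  assumes q: "inv_sub q = - q"
  shows "\<exists>d. S ^ L dvd q - (\<Sum>j\<in>odd_below L. cst (d j) * (S ^ j * U j))"
proof (induction L)
  case (Suc L)
  then obtain d where d: "S ^ L dvd q - (\<Sum>j\<in>odd_below L. cst (d j) * (S ^ j * U j))"
    by blast
  define r where "r = q - (\<Sum>j\<in>odd_below L. cst (d j) * (S ^ j * U j))"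
  show ?case
  proof (cases "even L")
    case True
    have "inv_sub (cst (d j) * (S ^ j * U j)) = - (cst (d j) * (S ^ j * U j))" for j
      by (simp only: inv_sub_mult[of "cst (d j)"] inv_sub_cst inv_sub_S_power_U mult_minus_right)
    then have "inv_sub r = - r"
      by (simp del: inv_sub_mult add: r_def q inv_sub_sum sum_negf)
    with True d have "S ^ Suc L dvd r"
      unfolding r_def by (blast intro: antisymmetric_S_power_dvd_Suc)
    moreover have "odd_below (Suc L) = odd_below L"
      using True less_Suc_eq by auto
    ultimately show ?thesis
      unfolding r_def by auto
  next
    case False
    obtain r' where r': "r = S ^ L * r'"
      using d unfolding r_def by blast
    define e where "e = augmentation r' / augmentation (U L)"
    have "S dvd r' - cst e * U L"
      using False augmentation_U_odd by (simp add: S_dvd_iff e_def)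
    moreover have "r - cst e * (S ^ L * U L) = S ^ L * (r' - cst e * U L)"
      by (simp add: r' algebra_simps)
    ultimately have dvd: "S ^ Suc L dvd r - cst e * (S ^ L * U L)"
      by (simp only: power_Suc2 mult_dvd_mono[OF dvd_refl])
    have "odd_below (Suc L) = insert L (odd_below L)"
      using False less_Suc_eq by auto
    then have "q - (\<Sum>j\<in>odd_below (Suc L). cst ((d(L := e)) j) * (S ^ j * U j))
        = r - cst e * (S ^ L * U L)"
      by (simp add: r_def sum.insert diff_diff_eq add.commute)
    with dvd show ?thesis
      by (intro exI[of _ "d(L := e)"]) (simp only:)
  qed
qed simp

section \<open>The basis\<close>

lemma sum_Bidx: "(\<Sum>i\<in>Bidx L. f i) = (\<Sum>k<L. f (Inl k)) + (\<Sum>j\<in>odd_below L. f (Inr j))"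
  unfolding Bidx_def by (subst sum.union_disjoint) (auto simp: sum.reindex)

lemma card_odd_below: "card (odd_below L) = L div 2"
proof (induction L)
  case (Suc L)
  have "odd_below (Suc L) = (if odd L then insert L (odd_below L) else odd_below L)"
    using less_Suc_eq by auto
  with Suc show ?case
    by auto
qed simp

lemma card_Bidx: "card (Bidx L) = L + nat \<lfloor>real L / 2\<rfloor>"
proof -
  have "card (Bidx L) = L + L div 2"
    unfolding Bidx_def by (subst card_Un_disjoint) (auto simp: card_image card_odd_below)
  moreover have "nat \<lfloor>real L / 2\<rfloor> = L div 2"
    using floor_divide_of_nat_eq[of L 2, where ?'a = real] by simp
  ultimately show ?thesis
    by simp
qed

lemma basis_comb_in_OA: "(\<Sum>i\<in>Bidx L. smul (c i) (bvec i)) \<in> OA"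
proof (rule lsubspace_sum[OF lsubspace_OA])
  fix i
  have "bvec i \<in> OA"
    by (cases i) (simp_all add: X_in_OA Y_in_OA)
  then show "smul (c i) (bvec i) \<in> OA"
    using lsubspace_OA by (simp add: lsubspace_def)
qed

lemma fst_basis_comb:
  "fst (\<Sum>i\<in>Bidx L. smul (c i) (bvec i)) = (\<Sum>k<L. cst (2 * c (Inl k)) * S ^ k)"
  by (simp add: sum_Bidx fst_sum smul_def X_def Y_def ac_simps flip: cst_mult)

lemma snd_snd_basis_comb:
  "snd (snd (\<Sum>i\<in>Bidx L. smul (c i) (bvec i))) = (\<Sum>j\<in>odd_below L. cst (c (Inr j)) * (S ^ j * U j))"
  by (simp add: sum_Bidx snd_sum smul_def X_def Y_eq)

lemma basis_comb_in_Iid_imp_zero: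
  assumes "(\<Sum>i\<in>Bidx L. smul (c i) (bvec i)) \<in> Iid L" and "i \<in> Bidx L"
  shows "c i = 0"
proof -
  have "S ^ L dvd (\<Sum>k<L. cst (2 * c (Inl k)) * (S ^ k * 1))"
    using assms(1) by (simp add: Iid_iff fst_basis_comb)
  then have Inl: "\<forall>k<L. 2 * c (Inl k) = 0"
    by (rule S_adic_coeffs_eq_0[rotated]) simp
  define d where "d k = (if odd k then c (Inr k) else 0)" for k
  define u where "u k = (if odd k then U k else 1)" for k
  have "(\<Sum>j\<in>odd_below L. cst (c (Inr j)) * (S ^ j * U j)) = (\<Sum>k<L. cst (d k) * (S ^ k * u k))"
    by (simp add: sum.inter_filter[symmetric] d_def u_def if_distrib cong: if_cong)
  then have "S ^ L dvd (\<Sum>k<L. cst (d k) * (S ^ k * u k))"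
    using assms(1) by (simp add: Iid_iff snd_snd_basis_comb)
  then have Inr: "\<forall>k<L. d k = 0"
    by (rule S_adic_coeffs_eq_0[rotated]) (simp add: u_def augmentation_U_odd)
  from assms(2) Inl Inr show ?thesis
    by (auto simp: Bidx_def d_def)
qed

lemma OA_eq_basis_comb_mod_Iid:
  assumes x: "x \<in> OA"
  shows "\<exists>c. x - (\<Sum>i\<in>Bidx L. smul (c i) (bvec i)) \<in> Iid L"
proof -
  obtain p q where x_eq: "x = (p, inv_sub p, q)" and q: "inv_sub q = - q"
    using x unfolding OA_def by blast
  obtain a where a: "S ^ L dvd p - (\<Sum>k<L. cst (a k) * S ^ k)"
    using S_adic_expansion by blast
  obtain d where d: "S ^ L dvd q - (\<Sum>j\<in>odd_below L. cst (d j) * (S ^ j * U j))"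
    using antisymmetric_S_adic_expansion[OF q] by blast
  define c where "c i = (case i of Inl k \<Rightarrow> a k / 2 | Inr j \<Rightarrow> d j)" for i
  have "x - (\<Sum>i\<in>Bidx L. smul (c i) (bvec i)) \<in> Iid L"
    using a d OA_diff[OF x basis_comb_in_OA]
    by (simp add: Iid_iff x_eq fst_basis_comb snd_snd_basis_comb c_def)
  then show ?thesis
    by blast
qed

theorem proposition4:
  fixes L :: nat
  assumes "L \<ge> 1"
  shows "(\<exists>n. derived n \<subseteq> Iid L)
       \<and> (\<forall>c. (\<Sum>i\<in>Bidx L. smul (c i) (bvec i)) \<in> Iid L \<longrightarrow> (\<forall>i\<in>Bidx L. c i = 0))
       \<and> (\<forall>x\<in>OA. \<exists>c. x - (\<Sum>i\<in>Bidx L. smul (c i) (bvec i)) \<in> Iid L)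
       \<and> card (Bidx L) = L + nat \<lfloor>real L / 2\<rfloor>"
  using derived_subset_Iid[OF assms] basis_comb_in_Iid_imp_zero OA_eq_basis_comb_mod_Iid card_Bidx
  by blast

end
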